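(* Every Menger proper $K$-analytic space is $\sigma$-compact.
   Context: All spaces are completely regular. A space is analytic if it is a continuous image of the space $\mathbb{P}$ of irrationals. A space is proper $K$-analytic if it admits a perfect map (continuous closed surjection with compact fibers) onto an analytic subspace of $\mathbb{R}^\omega$. $X$ is Menger if for every sequence $(\mathcal{U}_n)_{n<\omega}$ of open covers there are finite $\mathcal{V}_n\subseteq\mathcal{U}_n$ with $\bigcup_n\mathcal{V}_n$ covering $X$. *)

theory Defs
  imports "HOL-Analysis.Analysis"
begin

definition irrationals_space :: "real topology" where
  "irrationals_space = subtopology euclideanreal (- \<rat>)"

definition analytic_space :: "'a topology \<Rightarrow> bool" where
  "analytic_space X \<longleftrightarrow> topspace X = {} \<or>
     (\<exists>f. continuous_map irrationals_space X f \<and> f ` topspace irrationals_space = topspace X)"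

definition R_omega :: "(nat \<Rightarrow> real) topology" where
  "R_omega = product_topology (\<lambda>_. euclideanreal) UNIV"

definition proper_K_analytic :: "'a topology \<Rightarrow> bool" where
  "proper_K_analytic X \<longleftrightarrow>
     (\<exists>A f. A \<subseteq> topspace R_omega \<and> analytic_space (subtopology R_omega A) \<and>
            perfect_map X (subtopology R_omega A) f)"

definition open_cover :: "'a topology \<Rightarrow> 'a set set \<Rightarrow> bool" where
  "open_cover X \<U> \<longleftrightarrow> (\<forall>U\<in>\<U>. openin X U) \<and> topspace X \<subseteq> \<Union>\<U>"

definition menger_space :: "'a topology \<Rightarrow> bool" where
  "menger_space X \<longleftrightarrow>
     (\<forall>\<U> :: nat \<Rightarrow> 'a set set. (\<forall>n. open_cover X (\<U> n)) \<longrightarrow>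
        (\<exists>\<V>. (\<forall>n. finite (\<V> n) \<and> \<V> n \<subseteq> \<U> n) \<and> topspace X \<subseteq> \<Union>(\<Union>n. \<V> n)))"

definition sigma_compact_space :: "'a topology \<Rightarrow> bool" where
  "sigma_compact_space X \<longleftrightarrow>
     (\<exists>K :: nat \<Rightarrow> 'a set. (\<forall>n. compactin X (K n)) \<and> topspace X = (\<Union>n. K n))"

end

theory Submission
  imports Defs
begin

text \<open>A perfect preimage of a \<sigma>-compact space is \<sigma>-compact, and the Menger property passes to
  continuous images, so it suffices to show that a Menger analytic subspace \<open>A\<close> of \<open>\<real>\<^sup>\<omega>\<close> is
  \<sigma>-compact; after a coordinatewise \<open>arctan\<close> we may assume that \<open>A\<close> lies in a compact metric
  cube \<open>K\<close>. Write \<open>A = h(P)\<close> with \<open>P\<close> the irrationals and let \<open>U\<close> be the union of all open \<open>V\<close>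
  such that \<open>h(V \<inter> P)\<close> is covered by countably many compact subsets of \<open>A\<close>; by Lindelof,
  \<open>h(U \<inter> P)\<close> is covered in this way too, so it suffices to show that \<open>F = P - U\<close> is empty.

  For every open interval \<open>I\<close> meeting \<open>F\<close> the closure of \<open>h(I \<inter> F)\<close>, which is compact as \<open>K\<close> is,
  cannot lie in \<open>A\<close>, for otherwise \<open>I \<subseteq> U\<close>. So if \<open>F \<noteq> {}\<close> one can build Hurewicz's tree: nested
  intervals meeting \<open>F\<close>, indexed by finite sequences of naturals, each carrying a point outside
  \<open>A\<close> near the image of its interval. The points at depth \<open>\<le> n\<close> form a closed set \<open>Z\<^sub>n\<close> disjoint
  from \<open>A\<close>, and every branch \<open>g\<close> shrinks to a point \<open>x \<in> F\<close> with \<open>h x\<close> within \<open>1/(g n + 1)\<close> of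
  the node at depth \<open>n\<close>. Applying the Menger property to the increasing open covers
  \<open>{y \<in> A. 1/(m+1) < d(y, Z\<^sub>n)}\<close> of \<open>A\<close> yields a branch \<open>g\<close> whose limit point contradicts
  this.\<close>

lemma analytic_space_continuous_image:
  assumes "analytic_space X" "continuous_map X Y g" "g ` topspace X = topspace Y"
  shows "analytic_space Y"
  using assms unfolding analytic_space_def
  by (metis continuous_map_compose image_comp image_is_empty)

lemma sigma_compact_space_continuous_image:
  assumes "sigma_compact_space X" "continuous_map X Y g" "g ` topspace X = topspace Y"
  shows "sigma_compact_space Y"
proof -
  obtain K :: "nat \<Rightarrow> _" where K: "\<And>n. compactin X (K n)" "topspace X = (\<Union>n. K n)"
    using assms(1) unfolding sigma_compact_space_def by blast
  have "compactin Y (g ` K n)" for n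
    using K(1) assms(2) by (rule image_compactin)
  moreover have "topspace Y = (\<Union>n. g ` K n)"
    using assms(3) K(2) by (simp add: image_UN)
  ultimately show ?thesis
    unfolding sigma_compact_space_def by (intro exI[of _ "\<lambda>n. g ` K n"]) simp
qed

lemma sigma_compact_space_perfect_map_preimage:
  assumes "sigma_compact_space Y" "perfect_map X Y f"
  shows "sigma_compact_space X"
proof -
  obtain K :: "nat \<Rightarrow> _" where K: "\<And>n. compactin Y (K n)" "topspace Y = (\<Union>n. K n)"
    using assms(1) unfolding sigma_compact_space_def by blast
  have "proper_map X Y f" using assms(2) by (simp add: perfect_map_def)
  then have "compactin X {x \<in> topspace X. f x \<in> K n}" for n
    using K(1) by (rule compactin_proper_map_preimage)
  moreover have "topspace X = (\<Union>n. {x \<in> topspace X. f x \<in> K n})"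
  proof
    show "topspace X \<subseteq> (\<Union>n. {x \<in> topspace X. f x \<in> K n})"
    proof
      fix x assume "x \<in> topspace X"
      then have "f x \<in> topspace Y" using assms(2) by (auto simp: perfect_map_def)
      then obtain n where "f x \<in> K n" using K(2) by blast
      then show "x \<in> (\<Union>n. {x \<in> topspace X. f x \<in> K n})" using \<open>x \<in> topspace X\<close> by blast
    qed
  qed blast
  ultimately show ?thesis
    unfolding sigma_compact_space_def
    by (intro exI[of _ "\<lambda>n. {x \<in> topspace X. f x \<in> K n}"]) simp
qed

lemma menger_spaceE:
  fixes \<U> :: "nat \<Rightarrow> 'a set set"
  assumes "menger_space X" "\<And>n. open_cover X (\<U> n)"
  obtains \<V> where "\<And>n. finite (\<V> n)" "\<And>n. \<V> n \<subseteq> \<U> n" "topspace X \<subseteq> \<Union>(\<Union>n. \<V> n)"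
proof -
  have "(\<forall>n. open_cover X (\<U> n)) \<longrightarrow>
      (\<exists>\<V>. (\<forall>n. finite (\<V> n) \<and> \<V> n \<subseteq> \<U> n) \<and> topspace X \<subseteq> \<Union>(\<Union>n. \<V> n))"
    using assms(1) unfolding menger_space_def by blast
  then show ?thesis using assms(2) that by blast
qed

lemma menger_space_continuous_image:
  assumes "menger_space X" "continuous_map X Y g" "g ` topspace X = topspace Y"
  shows "menger_space Y"
  unfolding menger_space_def
proof (intro allI impI)
  fix \<U> :: "nat \<Rightarrow> 'b set set"
  assume cov: "\<forall>n. open_cover Y (\<U> n)"
  define pre where "pre U = {x \<in> topspace X. g x \<in> U}" for U
  have cover: "open_cover X (pre ` \<U> n)" for n
  proof -
    have "openin X (pre U)" if "U \<in> \<U> n" for U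
      using cov that assms(2) unfolding open_cover_def pre_def
      by (simp add: openin_continuous_map_preimage)
    moreover have "topspace X \<subseteq> \<Union>(pre ` \<U> n)"
    proof
      fix x assume x: "x \<in> topspace X"
      then have "g x \<in> topspace Y" using assms(3) by blast
      then obtain U where "U \<in> \<U> n" "g x \<in> U" using cov unfolding open_cover_def by blast
      then show "x \<in> \<Union>(pre ` \<U> n)" using x unfolding pre_def by blast
    qed
    ultimately show ?thesis unfolding open_cover_def by blast
  qed
  obtain \<V> where \<V>: "\<And>n. finite (\<V> n)" "\<And>n. \<V> n \<subseteq> pre ` \<U> n"
      "topspace X \<subseteq> \<Union>(\<Union>n. \<V> n)"
    using assms(1) cover by (rule menger_spaceE[where \<U>="\<lambda>n. pre ` \<U> n"]) blast
  have "\<exists>\<W>. \<W> \<subseteq> \<U> n \<and> finite \<W> \<and> \<V> n = pre ` \<W>" for n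
    using finite_subset_image[OF \<V>(1,2)] by blast
  then obtain \<W> where \<W>: "\<And>n. \<W> n \<subseteq> \<U> n \<and> finite (\<W> n) \<and> \<V> n = pre ` \<W> n"
    by metis
  have "topspace Y \<subseteq> \<Union>(\<Union>n. \<W> n)"
  proof
    fix y assume "y \<in> topspace Y"
    then obtain x where "x \<in> topspace X" "y = g x" using assms(3) by blast
    then obtain n V where "V \<in> \<V> n" "x \<in> V" using \<V>(3) by blast
    then obtain W where "W \<in> \<W> n" "x \<in> pre W" using \<W> by blast
    then show "y \<in> \<Union>(\<Union>n. \<W> n)" using \<open>y = g x\<close> unfolding pre_def by blast
  qed
  then show "\<exists>\<V>. (\<forall>n. finite (\<V> n) \<and> \<V> n \<subseteq> \<U> n) \<and> topspace Y \<subseteq> \<Union>(\<Union>n. \<V> n)"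
    using \<W> by blast
qed

lemma menger_space_increasing_covers:
  fixes W :: "nat \<Rightarrow> nat \<Rightarrow> 'a set"
  assumes "menger_space X" "\<And>n m. openin X (W n m)" "\<And>n. mono (W n)"
    and "\<And>n. topspace X \<subseteq> (\<Union>m. W n m)"
  obtains g where "topspace X \<subseteq> (\<Union>n. W n (g n))"
proof -
  have cover: "open_cover X (range (W n))" for n
    by (simp add: open_cover_def assms(2,4))
  obtain \<V> where \<V>: "\<And>n. finite (\<V> n)" "\<And>n. \<V> n \<subseteq> range (W n)"
      "topspace X \<subseteq> \<Union>(\<Union>n. \<V> n)"
    using assms(1) cover by (rule menger_spaceE[where \<U>="\<lambda>n. range (W n)"]) blast
  have "\<forall>n. \<exists>M. \<Union>(\<V> n) \<subseteq> W n M"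
  proof
    fix n
    obtain I where I: "finite I" "\<V> n = W n ` I"
      using finite_subset_image[OF \<V>(1,2)] by blast
    obtain M where "\<forall>i\<in>I. i \<le> M"
      using finite_nat_set_iff_bounded_le[THEN iffD1, OF I(1)] by blast
    then have "\<Union>(\<V> n) \<subseteq> W n M"
      by (auto simp: I(2) dest: monoD[OF assms(3)])
    then show "\<exists>M. \<Union>(\<V> n) \<subseteq> W n M" ..
  qed
  then obtain g where g: "\<forall>n. \<Union>(\<V> n) \<subseteq> W n (g n)"
    by (rule choice[THEN exE])
  have "topspace X \<subseteq> (\<Union>n. W n (g n))"
  proof
    fix x assume "x \<in> topspace X"
    then obtain n V where "V \<in> \<V> n" "x \<in> V" using \<V>(3) by blast
    then show "x \<in> (\<Union>n. W n (g n))" using g by blast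
  qed
  then show ?thesis by (rule that)
qed

lemma homeomorphic_analytic_space:
  "X homeomorphic_space Y \<Longrightarrow> analytic_space X \<longleftrightarrow> analytic_space Y"
  by (meson analytic_space_continuous_image homeomorphic_imp_continuous_map
      homeomorphic_imp_surjective_map homeomorphic_space homeomorphic_space_sym)

lemma homeomorphic_menger_space:
  "X homeomorphic_space Y \<Longrightarrow> menger_space X \<longleftrightarrow> menger_space Y"
  by (meson menger_space_continuous_image homeomorphic_imp_continuous_map
      homeomorphic_imp_surjective_map homeomorphic_space homeomorphic_space_sym)

lemma homeomorphic_sigma_compact_space:
  "X homeomorphic_space Y \<Longrightarrow> sigma_compact_space X \<longleftrightarrow> sigma_compact_space Y"
  by (meson sigma_compact_space_continuous_image homeomorphic_imp_continuous_map
      homeomorphic_imp_surjective_map homeomorphic_space homeomorphic_space_sym)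

lemma compact_PiE_UNIV:
  fixes K :: "'i \<Rightarrow> 'a::topological_space set"
  assumes "\<And>i. compact (K i)"
  shows "compact (Pi\<^sub>E UNIV K)"
  using assms compactin_PiE[of "\<lambda>_. euclidean" UNIV K]
  by (simp add: euclidean_product_topology)

lemma homeomorphic_space_arctan_image:
  fixes A :: "(nat \<Rightarrow> real) set"
  shows "top_of_set A homeomorphic_space top_of_set ((\<lambda>y i. arctan (y i)) ` A)"
proof -
  let ?e = "\<lambda>(y :: nat \<Rightarrow> real) i. arctan (y i)"
  let ?e' = "\<lambda>(y :: nat \<Rightarrow> real) i. tan (y i)"
  have coord: "continuous_on S (\<lambda>y :: nat \<Rightarrow> real. y i)" for S i
    by (rule continuous_on_subset[OF continuous_on_product_coordinates]) simp
  have "continuous_on A ?e"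
    by (intro continuous_on_coordinatewise_then_product continuous_on_arctan coord)
  moreover have "continuous_on (?e ` A) (\<lambda>y. tan (y i))" for i
    using continuous_on_tan[of "{t. cos t \<noteq> 0}"]
    by (rule continuous_on_compose2[OF _ coord]) auto
  then have "continuous_on (?e ` A) ?e'"
    by (rule continuous_on_coordinatewise_then_product)
  ultimately have "homeomorphic_maps (top_of_set A) (top_of_set (?e ` A)) ?e ?e'"
    unfolding homeomorphic_maps_def by (auto simp: tan_arctan)
  then show ?thesis by (rule homeomorphic_maps_imp_homeomorphic_space)
qed

lemma arctan_image_subset_cube:
  "(\<lambda>y i. arctan (y i)) ` A \<subseteq> Pi\<^sub>E UNIV (\<lambda>_::nat. {-(pi/2)..pi/2})"
  using arctan_bounded by (auto simp: less_imp_le)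

definition sigma_compact_covered :: "'a::topological_space set \<Rightarrow> 'a set \<Rightarrow> bool" where
  "sigma_compact_covered A S \<longleftrightarrow>
     (\<exists>\<C>. countable \<C> \<and> (\<forall>C\<in>\<C>. compact C \<and> C \<subseteq> A) \<and> S \<subseteq> \<Union>\<C>)"

lemma sigma_compact_covered_subset:
  "sigma_compact_covered A T \<Longrightarrow> S \<subseteq> T \<Longrightarrow> sigma_compact_covered A S"
  unfolding sigma_compact_covered_def by (meson order_trans)

lemma sigma_compact_covered_compact:
  "compact C \<Longrightarrow> C \<subseteq> A \<Longrightarrow> sigma_compact_covered A C"
  unfolding sigma_compact_covered_def by (intro exI[of _ "{C}"]) auto

lemma sigma_compact_covered_Union:
  assumes "countable \<S>" "\<And>S. S \<in> \<S> \<Longrightarrow> sigma_compact_covered A S"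
  shows "sigma_compact_covered A (\<Union>\<S>)"
proof -
  have "\<forall>S\<in>\<S>. \<exists>\<C>. countable \<C> \<and> (\<forall>C\<in>\<C>. compact C \<and> C \<subseteq> A) \<and> S \<subseteq> \<Union>\<C>"
    using assms(2) unfolding sigma_compact_covered_def by blast
  then obtain \<C> where \<C>: "\<forall>S\<in>\<S>.
      countable (\<C> S) \<and> (\<forall>C\<in>\<C> S. compact C \<and> C \<subseteq> A) \<and> S \<subseteq> \<Union>(\<C> S)"
    by (rule bchoice[THEN exE])
  have "countable (\<Union>(\<C> ` \<S>))"
    using assms(1) \<C> by (intro countable_UN) auto
  moreover have "\<forall>C\<in>\<Union>(\<C> ` \<S>). compact C \<and> C \<subseteq> A"
    using \<C> by blast
  moreover have "\<Union>\<S> \<subseteq> \<Union>(\<Union>(\<C> ` \<S>))"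
  proof
    fix x assume "x \<in> \<Union>\<S>"
    then obtain S where "S \<in> \<S>" "x \<in> S" by blast
    then obtain C where "C \<in> \<C> S" "x \<in> C" using \<C> by blast
    then show "x \<in> \<Union>(\<Union>(\<C> ` \<S>))" using \<open>S \<in> \<S>\<close> by blast
  qed
  ultimately show ?thesis unfolding sigma_compact_covered_def by blast
qed

lemma sigma_compact_covered_Un:
  "sigma_compact_covered A S \<Longrightarrow> sigma_compact_covered A T \<Longrightarrow> sigma_compact_covered A (S \<union> T)"
  using sigma_compact_covered_Union[of "{S, T}" A] by fastforce

lemma sigma_compact_space_top_of_set:
  assumes "sigma_compact_covered A A"
  shows "sigma_compact_space (top_of_set A)"
proof -
  obtain \<C> where \<C>: "countable \<C>" "\<forall>C\<in>\<C>. compact C \<and> C \<subseteq> A" "A \<subseteq> \<Union>\<C>"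
    using assms unfolding sigma_compact_covered_def by blast
  show ?thesis
  proof (cases "\<C> = {}")
    case True
    then show ?thesis
      using \<C>(3) unfolding sigma_compact_space_def by (intro exI[of _ "\<lambda>_. {}"]) auto
  next
    case False
    then have "range (from_nat_into \<C>) = \<C>"
      using \<C>(1) by (rule range_from_nat_into)
    then have "\<forall>n. compactin (top_of_set A) (from_nat_into \<C> n)"
        "A = (\<Union>n. from_nat_into \<C> n)"
      using \<C>(2,3) by (auto simp: compactin_subtopology)
    then show ?thesis
      unfolding sigma_compact_space_def by (intro exI[of _ "from_nat_into \<C>"]) simp
  qed
qed

lemma sigma_compact_covered_open_Union:
  fixes \<V> :: "'a::second_countable_topology set set"
  assumes "\<And>V. V \<in> \<V> \<Longrightarrow> open V" "\<And>V. V \<in> \<V> \<Longrightarrow> sigma_compact_covered A (h ` (V \<inter> D))"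
  shows "sigma_compact_covered A (h ` (\<Union>\<V> \<inter> D))"
proof -
  obtain \<V>' where \<V>': "\<V>' \<subseteq> \<V>" "countable \<V>'" "\<Union>\<V>' = \<Union>\<V>"
    using Lindelof[OF assms(1)] by blast
  have "sigma_compact_covered A (\<Union>((\<lambda>V. h ` (V \<inter> D)) ` \<V>'))"
    using \<V>' assms(2) by (intro sigma_compact_covered_Union countable_image) auto
  moreover have "h ` (\<Union>\<V> \<inter> D) = \<Union>((\<lambda>V. h ` (V \<inter> D)) ` \<V>')"
    using \<V>'(3) by blast
  ultimately show ?thesis by simp
qed

lemma hurewicz_step:
  fixes h :: "real \<Rightarrow> 'b::metric_space"
  assumes F: "F \<subseteq> -\<rat>" and h: "continuous_on (-\<rat>) h"
    and not_in_A: "\<And>a b. {a<..<b} \<inter> F \<noteq> {} \<Longrightarrow> \<not> closure (h ` ({a<..<b} \<inter> F)) \<subseteq> A"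
    and q: "q \<in> closure (h ` ({a<..<b} \<inter> F))" and r: "r > 0" and c: "c \<in> \<rat>"
  obtains a' b' q' where "a < a'" "b' < b" "b' - a' < r" "c \<notin> {a'..b'}"
    "h ` ({a'<..<b'} \<inter> F) \<subseteq> ball q r" "q' \<in> closure (h ` ({a'<..<b'} \<inter> F))" "q' \<notin> A"
proof -
  have "\<exists>y\<in>h ` ({a<..<b} \<inter> F). dist y q < r/2"
    using q r closure_approachable by (metis half_gt_zero)
  then obtain x where x: "x \<in> {a<..<b}" "x \<in> F" "dist (h x) q < r/2" by blast
  then have "x \<noteq> c" using F c by auto
  obtain d where d: "d > 0" "\<And>y. y \<in> -\<rat> \<Longrightarrow> dist y x < d \<Longrightarrow> dist (h y) (h x) < r/2"
    using h x(2) F r unfolding continuous_on_iff by (metis half_gt_zero subsetD)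
  define \<rho> where "\<rho> = min d (min (x - a) (min (b - x) (min \<bar>x - c\<bar> (r/2)))) / 2"
  have \<rho>: "0 < \<rho>" "\<rho> < d" "\<rho> < x - a" "\<rho> < b - x" "\<rho> < \<bar>x - c\<bar>" "2 * \<rho> < r"
    using d(1) x(1) r \<open>x \<noteq> c\<close> unfolding \<rho>_def by (auto simp: min_def)
  have "x \<in> {x - \<rho><..<x + \<rho>} \<inter> F" using \<rho>(1) x(2) by simp
  then obtain q' where "q' \<in> closure (h ` ({x - \<rho><..<x + \<rho>} \<inter> F))" "q' \<notin> A"
    using not_in_A by blast
  moreover have "h ` ({x - \<rho><..<x + \<rho>} \<inter> F) \<subseteq> ball q r"
  proof
    fix y assume "y \<in> h ` ({x - \<rho><..<x + \<rho>} \<inter> F)"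
    then obtain z where z: "z \<in> {x - \<rho><..<x + \<rho>}" "z \<in> F" "y = h z" by blast
    then have "dist z x < d" using \<rho>(2) by (simp add: dist_real_def abs_less_iff)
    then have "dist (h z) (h x) < r/2" using d(2) z(2) F by blast
    then show "y \<in> ball q r"
      using x(3) z(3) dist_triangle_less_add[of "h z" "h x" "r/2" q "r/2"] by (simp add: dist_commute)
  qed
  moreover have "a < x - \<rho>" "x + \<rho> < b" "(x + \<rho>) - (x - \<rho>) < r" "c \<notin> {x - \<rho>..x + \<rho>}"
    using \<rho> by auto
  ultimately show ?thesis using that by blast
qed

lemma strict_nested_intervals_common_point:
  fixes a b :: "nat \<Rightarrow> real"
  assumes "\<And>n. a n < b n" "\<And>n. a n < a (Suc n)" "\<And>n. b (Suc n) < b n"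
  obtains x where "\<And>n. x \<in> {a n<..<b n}"
proof -
  have "incseq a" "decseq b"
    using assms(2,3) by (simp_all add: incseq_SucI decseq_SucI less_imp_le)
  have a_le_b: "a n \<le> b m" for n m
  proof -
    have "a n \<le> a (max n m)" using \<open>incseq a\<close> by (simp add: incseqD)
    also have "\<dots> \<le> b (max n m)" using assms(1) less_imp_le by blast
    also have "\<dots> \<le> b m" using \<open>decseq b\<close> by (simp add: decseqD)
    finally show ?thesis .
  qed
  then have "bdd_above (range a)" by (intro bdd_aboveI[of _ "b 0"]) auto
  define x where "x = (SUP n. a n)"
  have a_le_x: "a n \<le> x" and x_le_b: "x \<le> b n" for n
    unfolding x_def using \<open>bdd_above (range a)\<close> a_le_b by (simp_all add: cSUP_upper cSUP_least)
  have "x \<in> {a n<..<b n}" for n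
    using assms(2,3)[of n] a_le_x[of "Suc n"] x_le_b[of "Suc n"] by simp
  then show ?thesis by (rule that)
qed

text \<open>The radius allotted to the child \<open>s = m # t\<close>: the dependence on \<open>length s\<close> makes branches
  shrink, the dependence on \<open>sum_list s\<close> makes the children of a node accumulate only at that
  node. It is only used for nonempty \<open>s\<close> (at \<open>[]\<close> it is \<open>1 / 0 = 0\<close>).\<close>

definition hurewicz_radius :: "nat list \<Rightarrow> real" where
  "hurewicz_radius s = 1 / real (length s + sum_list s)"

definition branch :: "(nat \<Rightarrow> nat) \<Rightarrow> nat \<Rightarrow> nat list" where
  "branch g n = rev (map g [0..<n])"

lemma branch_Suc [simp]: "branch g (Suc n) = g n # branch g n"
  by (simp add: branch_def)

lemma length_branch [simp]: "length (branch g n) = n"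
  by (simp add: branch_def)

lemma hurewicz_radius_Cons_le_length: "hurewicz_radius (m # t) \<le> 1 / (real (length t) + 1)"
  unfolding hurewicz_radius_def by (intro divide_left_mono) auto

lemma hurewicz_radius_Cons_le_head: "hurewicz_radius (m # t) \<le> 1 / (real m + 1)"
  unfolding hurewicz_radius_def by (intro divide_left_mono) auto

text \<open>Excluding the \<open>k\<close>-th rational at depth \<open>k\<close> makes every branch converge to an irrational.\<close>

locale hurewicz_tree =
  fixes h :: "real \<Rightarrow> 'b::metric_space" and A :: "'b set" and F :: "real set"
    and lo hi :: "nat list \<Rightarrow> real" and pt :: "nat list \<Rightarrow> 'b"
  assumes pt_in_closure: "pt s \<in> closure (h ` ({lo s<..<hi s} \<inter> F))"
    and pt_notin: "pt s \<notin> A"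
    and lo_less: "lo t < lo (m # t)"
    and hi_less: "hi (m # t) < hi t"
    and width_less: "hi (m # t) - lo (m # t) < hurewicz_radius (m # t)"
    and avoids_rat: "from_nat_into \<rat> (length t) \<notin> {lo (m # t)..hi (m # t)}"
    and image_in_ball: "h ` ({lo (m # t)<..<hi (m # t)} \<inter> F) \<subseteq> ball (pt t) (hurewicz_radius (m # t))"
begin

lemma interval_meets: "{lo s<..<hi s} \<inter> F \<noteq> {}"
  using pt_in_closure[of s] by auto

lemma dist_pt_Cons: "dist (pt t) (pt (m # t)) \<le> hurewicz_radius (m # t)"
proof -
  have "pt (m # t) \<in> closure (ball (pt t) (hurewicz_radius (m # t)))"
    using pt_in_closure closure_mono[OF image_in_ball] by blast
  also have "\<dots> \<subseteq> cball (pt t) (hurewicz_radius (m # t))"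
    by (simp add: closure_minimal)
  finally show ?thesis by simp
qed

lemma closed_pt_image: "closed (pt ` {s. length s \<le> n})"
proof (induction n)
  case 0
  then show ?case by simp
next
  case (Suc n)
  define T where "T = pt ` {s. length s = Suc n}"
  have "z \<in> closure (pt ` {s. length s \<le> n})" if "z islimpt T" for z
    unfolding closure_approachable
  proof (intro allI impI)
    fix e :: real assume "e > 0"
    then obtain N :: nat where N: "1 / real (Suc N) < e/2"
      using reals_Archimedean[of "e/2"] by (auto simp: inverse_eq_divide)
    have "infinite (T \<inter> ball z (e/2))"
      using that \<open>e > 0\<close> by (simp add: islimpt_eq_infinite_ball)
    moreover have "finite (pt ` {s. set s \<subseteq> {..N} \<and> length s = Suc n})"
      by (intro finite_imageI finite_lists_length_eq) simp
    ultimately have "\<not> T \<inter> ball z (e/2) \<subseteq> pt ` {s. set s \<subseteq> {..N} \<and> length s = Suc n}"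
      using finite_subset by blast
    then obtain s where s: "length s = Suc n" "pt s \<in> ball z (e/2)" "\<not> set s \<subseteq> {..N}"
      unfolding T_def by blast
    then obtain m t where "s = m # t" by (cases s) auto
    have "N < sum_list s"
      using s(3) member_le_sum_list[of _ s] by fastforce
    then have "hurewicz_radius s \<le> 1 / real (Suc N)"
      unfolding hurewicz_radius_def using s(1) by (intro divide_left_mono) auto
    then have "dist (pt t) (pt s) < e/2"
      using dist_pt_Cons[of t m] N \<open>s = m # t\<close> by simp
    then have "dist (pt t) z < e"
      using s(2) dist_triangle_half_l[of "pt t" "pt s" e z] by (simp add: dist_commute)
    moreover have "length t \<le> n" using s(1) \<open>s = m # t\<close> by simp
    ultimately show "\<exists>y\<in>pt ` {s. length s \<le> n}. dist y z < e" by blast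
  qed
  then have "z \<in> pt ` {s. length s \<le> n}" if "z islimpt T" for z
    using that closure_closed[OF Suc.IH] by blast
  then have "closed (pt ` {s. length s \<le> n} \<union> T)"
    using Suc.IH unfolding closed_limpt islimpt_Un by blast
  moreover have "pt ` {s. length s \<le> Suc n} = pt ` {s. length s \<le> n} \<union> T"
    unfolding T_def by (auto simp: le_Suc_eq)
  ultimately show ?case by simp
qed

lemma branch_point:
  assumes F_closed: "closure F - \<rat> \<subseteq> F"
  obtains x where "x \<in> F" "\<And>n. dist (pt (branch g n)) (h x) < 1 / (real (g n) + 1)"
proof -
  define a where "a n = lo (branch g n)" for n
  define b where "b n = hi (branch g n)" for n
  have a_Suc: "a n < a (Suc n)" and b_Suc: "b (Suc n) < b n" for n
    using lo_less hi_less by (simp_all add: a_def b_def)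
  have width: "b (Suc n) - a (Suc n) < 1 / (real n + 1)" for n
    using width_less[of "g n" "branch g n"] hurewicz_radius_Cons_le_length[of "g n" "branch g n"]
    by (simp add: a_def b_def)
  have "a n < b n" for n
    using interval_meets[of "branch g n"] by (auto simp: a_def b_def)
  then obtain x where x_in: "\<And>n. x \<in> {a n<..<b n}"
    using a_Suc b_Suc by (rule strict_nested_intervals_common_point) blast
  have "x \<notin> \<rat>"
  proof
    assume "x \<in> \<rat>"
    moreover have "range (from_nat_into \<rat>) = (\<rat> :: real set)"
      using Rats_0 countable_rat by (intro range_from_nat_into) auto
    ultimately obtain k where "from_nat_into \<rat> k = x" by (metis rangeE)
    then show False
      using avoids_rat[of "branch g k" "g k"] x_in[of "Suc k"] by (simp add: a_def b_def)
  qed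
  moreover have "x \<in> closure F"
    unfolding closure_approachable
  proof (intro allI impI)
    fix e :: real assume "e > 0"
    then obtain n :: nat where n: "1 / (real n + 1) < e"
      using reals_Archimedean[of e] by (auto simp: inverse_eq_divide add.commute)
    have "{a (Suc n)<..<b (Suc n)} \<inter> F \<noteq> {}"
      using interval_meets[of "branch g (Suc n)"] by (simp add: a_def b_def)
    then obtain z where "z \<in> {a (Suc n)<..<b (Suc n)}" "z \<in> F" by blast
    moreover have "dist z x < e"
      using calculation(1) x_in[of "Suc n"] width[of n] n by (auto simp: dist_real_def)
    ultimately show "\<exists>z\<in>F. dist z x < e" by blast
  qed
  ultimately have "x \<in> F" using F_closed by blast
  moreover have "dist (pt (branch g n)) (h x) < 1 / (real (g n) + 1)" for n
  proof -
    have "x \<in> {lo (branch g (Suc n))<..<hi (branch g (Suc n))} \<inter> F"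
      using x_in[of "Suc n"] \<open>x \<in> F\<close> by (simp add: a_def b_def)
    then have "h x \<in> ball (pt (branch g n)) (hurewicz_radius (branch g (Suc n)))"
      using image_in_ball[of "g n" "branch g n"] unfolding branch_Suc by blast
    then show ?thesis
      using hurewicz_radius_Cons_le_head[of "g n" "branch g n"] by simp
  qed
  ultimately show ?thesis by (rule that)
qed

lemma not_menger_space:
  assumes F_closed: "closure F - \<rat> \<subseteq> F" and "h ` F \<subseteq> A"
  shows "\<not> menger_space (top_of_set A)"
proof
  assume menger: "menger_space (top_of_set A)"
  define Z where "Z n = pt ` {s. length s \<le> n}" for n
  define W where "W n m = A \<inter> {y. 1 / (real m + 1) < infdist y (Z n)}" for n m :: nat
  have W_open: "openin (top_of_set A) (W n m)" for n m
    unfolding W_def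
    by (intro openin_open_Int open_Collect_less continuous_on_const continuous_on_infdist continuous_on_id)
  have W_mono: "mono (W n)" for n
  proof (intro monoI)
    fix m m' :: nat assume "m \<le> m'"
    then have "1 / (real m' + 1) \<le> 1 / (real m + 1)" by (intro divide_left_mono) auto
    then show "W n m \<subseteq> W n m'" unfolding W_def by auto
  qed
  have W_cover: "topspace (top_of_set A) \<subseteq> (\<Union>m. W n m)" for n
  proof
    fix y assume "y \<in> topspace (top_of_set A)"
    then have "y \<in> A" by simp
    then have "y \<notin> Z n" using pt_notin unfolding Z_def by blast
    moreover have "closed (Z n)" unfolding Z_def by (rule closed_pt_image)
    moreover have "pt [] \<in> Z n" unfolding Z_def by simp
    ultimately have "infdist y (Z n) > 0" using infdist_pos_not_in_closed by blast
    then obtain m :: nat where "1 / (real m + 1) < infdist y (Z n)"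
      using reals_Archimedean by (auto simp: inverse_eq_divide add.commute)
    then show "y \<in> (\<Union>m. W n m)" using \<open>y \<in> A\<close> unfolding W_def by blast
  qed
  obtain g where g: "topspace (top_of_set A) \<subseteq> (\<Union>n. W n (g n))"
    using menger W_open W_mono W_cover by (rule menger_space_increasing_covers)
  obtain x where "x \<in> F" and x: "\<And>n. dist (pt (branch g n)) (h x) < 1 / (real (g n) + 1)"
    using F_closed by (rule branch_point[where g = g]) blast
  then have "h x \<in> topspace (top_of_set A)" using assms(2) by auto
  then obtain n where "h x \<in> W n (g n)" using g by blast
  then have "1 / (real (g n) + 1) < infdist (h x) (Z n)" unfolding W_def by blast
  also have "\<dots> \<le> dist (h x) (pt (branch g n))"
    unfolding Z_def by (rule infdist_le) simp
  finally show False using x[of n] by (simp add: dist_commute)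
qed

end

lemma hurewicz_tree_exists:
  fixes h :: "real \<Rightarrow> 'b::metric_space"
  assumes F: "F \<subseteq> -\<rat>" and h: "continuous_on (-\<rat>) h" and "F \<noteq> {}"
    and not_in_A: "\<And>a b. {a<..<b} \<inter> F \<noteq> {} \<Longrightarrow> \<not> closure (h ` ({a<..<b} \<inter> F)) \<subseteq> A"
  obtains lo hi pt where "hurewicz_tree h A F lo hi pt"
proof -
  define good :: "real \<times> real \<times> 'b \<Rightarrow> bool" where
    "good = (\<lambda>(a, b, q). q \<in> closure (h ` ({a<..<b} \<inter> F)) \<and> q \<notin> A)"
  define child :: "nat list \<Rightarrow> nat \<Rightarrow> real \<times> real \<times> 'b \<Rightarrow> real \<times> real \<times> 'b \<Rightarrow> bool" where
    "child t m = (\<lambda>(a, b, q) (a', b', q'). a < a' \<and> b' < b \<and> b' - a' < hurewicz_radius (m # t) \<and>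
       from_nat_into \<rat> (length t) \<notin> {a'..b'} \<and>
       h ` ({a'<..<b'} \<inter> F) \<subseteq> ball q (hurewicz_radius (m # t)))" for t m
  have step: "\<exists>s'. good s' \<and> child t m s s'" if "good s" for s t m
  proof -
    obtain a b q where s: "s = (a, b, q)" by (metis prod.exhaust)
    have "hurewicz_radius (m # t) > 0" by (simp add: hurewicz_radius_def)
    moreover have "from_nat_into \<rat> (length t) \<in> (\<rat> :: real set)"
      using Rats_0 by (intro from_nat_into) auto
    moreover have "q \<in> closure (h ` ({a<..<b} \<inter> F))"
      using that by (simp add: good_def s)
    ultimately obtain a' b' q' where "a < a'" "b' < b" "b' - a' < hurewicz_radius (m # t)"
      "from_nat_into \<rat> (length t) \<notin> {a'..b'}"
      "h ` ({a'<..<b'} \<inter> F) \<subseteq> ball q (hurewicz_radius (m # t))"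
      "q' \<in> closure (h ` ({a'<..<b'} \<inter> F))" "q' \<notin> A"
      using hurewicz_step[OF F h not_in_A] by blast
    then have "good (a', b', q') \<and> child t m s (a', b', q')"
      by (simp add: good_def child_def s)
    then show ?thesis ..
  qed
  obtain x where "x \<in> F" using \<open>F \<noteq> {}\<close> by blast
  then have "{x - 1<..<x + 1} \<inter> F \<noteq> {}" by force
  then obtain q where "q \<in> closure (h ` ({x - 1<..<x + 1} \<inter> F))" "q \<notin> A"
    using not_in_A by blast
  then have root: "good (x - 1, x + 1, q)" by (simp add: good_def)
  define node where "node = rec_list (x - 1, x + 1, q) (\<lambda>m t s. SOME s'. good s' \<and> child t m s s')"
  have node_Cons: "node (m # t) = (SOME s'. good s' \<and> child t m (node t) s')" for m t
    by (simp add: node_def)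
  have good_node: "good (node t)" for t
  proof (induction t)
    case Nil
    then show ?case using root by (simp add: node_def)
  next
    case (Cons m t)
    then show ?case unfolding node_Cons using someI_ex[OF step] by blast
  qed
  have child_node: "child t m (node t) (node (m # t))" for t m
    unfolding node_Cons using someI_ex[OF step[OF good_node]] by blast
  have "hurewicz_tree h A F (\<lambda>t. fst (node t)) (\<lambda>t. fst (snd (node t))) (\<lambda>t. snd (snd (node t)))"
    using good_node child_node by unfold_locales (auto simp: good_def child_def case_prod_beta)
  then show ?thesis by (rule that)
qed

lemma sigma_compact_covered_if_menger_image_of_irrationals:
  fixes h :: "real \<Rightarrow> 'b::metric_space"
  assumes K: "compact K" "A \<subseteq> K" and h: "continuous_on (-\<rat>) h" "h ` (-\<rat>) = A"
    and menger: "menger_space (top_of_set A)"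
  shows "sigma_compact_covered A A"
proof -
  define \<V> where "\<V> = {V. open V \<and> sigma_compact_covered A (h ` (V \<inter> -\<rat>))}"
  define U where "U = \<Union>\<V>"
  have "open U" unfolding U_def \<V>_def by auto
  have U_covered: "sigma_compact_covered A (h ` (U \<inter> -\<rat>))"
    unfolding U_def by (rule sigma_compact_covered_open_Union) (simp_all add: \<V>_def)
  define F where "F = -\<rat> - U"
  have not_in_A: "\<not> closure (h ` ({a<..<b} \<inter> F)) \<subseteq> A" if "{a<..<b} \<inter> F \<noteq> {}" for a b
  proof
    let ?S = "h ` ({a<..<b} \<inter> F)"
    assume "closure ?S \<subseteq> A"
    then have "closure ?S = closure ?S \<inter> K" using K(2) by blast
    then have "compact (closure ?S)"
      using K(1) closed_Int_compact[OF closed_closure] by metis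
    then have "sigma_compact_covered A (closure ?S)"
      using \<open>closure ?S \<subseteq> A\<close> by (rule sigma_compact_covered_compact)
    then have "sigma_compact_covered A (closure ?S \<union> h ` (U \<inter> -\<rat>))"
      using U_covered by (rule sigma_compact_covered_Un)
    moreover have "h ` ({a<..<b} \<inter> -\<rat>) \<subseteq> closure ?S \<union> h ` (U \<inter> -\<rat>)"
      using closure_subset[of ?S] unfolding F_def by blast
    ultimately have "sigma_compact_covered A (h ` ({a<..<b} \<inter> -\<rat>))"
      by (rule sigma_compact_covered_subset)
    then have "{a<..<b} \<in> \<V>" by (simp add: \<V>_def)
    then have "{a<..<b} \<subseteq> U" unfolding U_def by (rule Union_upper)
    then show False using that unfolding F_def by blast
  qed
  have "F = {}"
  proof (rule ccontr)
    assume "F \<noteq> {}"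
    have "F \<subseteq> -\<rat>" unfolding F_def by blast
    then obtain lo hi pt where tree: "hurewicz_tree h A F lo hi pt"
      using h(1) \<open>F \<noteq> {}\<close> not_in_A by (rule hurewicz_tree_exists)
    have "closure F \<subseteq> -U"
      using \<open>open U\<close> by (intro closure_minimal) (auto simp: F_def)
    then have "closure F - \<rat> \<subseteq> F" unfolding F_def by blast
    moreover have "h ` F \<subseteq> A" using h(2) unfolding F_def by blast
    ultimately have "\<not> menger_space (top_of_set A)"
      by (rule hurewicz_tree.not_menger_space[OF tree])
    then show False using menger by blast
  qed
  then have "h ` (-\<rat>) \<subseteq> h ` (U \<inter> -\<rat>)" unfolding F_def by blast
  then show ?thesis using U_covered h(2) by (metis sigma_compact_covered_subset)
qed

lemma sigma_compact_space_if_menger_analytic_in_compact: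
  fixes A :: "'b::metric_space set"
  assumes "compact K" "A \<subseteq> K" "analytic_space (top_of_set A)" "menger_space (top_of_set A)"
  shows "sigma_compact_space (top_of_set A)"
proof (rule sigma_compact_space_top_of_set)
  show "sigma_compact_covered A A"
  proof (cases "A = {}")
    case True
    then show ?thesis unfolding sigma_compact_covered_def by blast
  next
    case False
    then obtain h where "continuous_map irrationals_space (top_of_set A) h"
        "h ` topspace irrationals_space = A"
      using assms(3) unfolding analytic_space_def by auto
    then have "continuous_on (-\<rat>) h" "h ` (-\<rat>) = A"
      by (auto simp: irrationals_space_def)
    then show ?thesis
      using assms(1,2,4) sigma_compact_covered_if_menger_image_of_irrationals by blast
  qed
qed

theorem theorem3p23:
  fixes X :: "'a topology"
  assumes "completely_regular_space X"
    and "menger_space X"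
    and "proper_K_analytic X"
  shows "sigma_compact_space X"
proof -
  obtain A :: "(nat \<Rightarrow> real) set" and f
    where A: "analytic_space (top_of_set A)" and f: "perfect_map X (top_of_set A) f"
    using assms(3) by (auto simp: proper_K_analytic_def R_omega_def euclidean_product_topology)
  have "menger_space (top_of_set A)"
    using f unfolding perfect_map_def
    by (intro menger_space_continuous_image[OF assms(2)]) auto
  define B where "B = (\<lambda>y i. arctan (y i)) ` A"
  have hom: "top_of_set A homeomorphic_space top_of_set B"
    unfolding B_def by (rule homeomorphic_space_arctan_image)
  have "sigma_compact_space (top_of_set B)"
  proof (rule sigma_compact_space_if_menger_analytic_in_compact)
    show "compact (Pi\<^sub>E UNIV (\<lambda>_::nat. {-(pi/2)..pi/2}))"
      by (rule compact_PiE_UNIV) simp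
    show "B \<subseteq> Pi\<^sub>E UNIV (\<lambda>_. {-(pi/2)..pi/2})"
      unfolding B_def by (rule arctan_image_subset_cube)
    show "analytic_space (top_of_set B)"
      using hom A homeomorphic_analytic_space by blast
    show "menger_space (top_of_set B)"
      using hom \<open>menger_space (top_of_set A)\<close> homeomorphic_menger_space by blast
  qed
  then have "sigma_compact_space (top_of_set A)"
    using hom homeomorphic_sigma_compact_space by blast
  then show ?thesis using f by (rule sigma_compact_space_perfect_map_preimage)
qed

end
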